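(* Let $\kappa$ and $\lambda$ be uncountable cardinals. If there exists a $\kappa$-complete non-principal ultrafilter $\mathcal U$ on $\lambda$, then $\ell_\infty(\lambda)$ admits an equivalent norm for which it is $\mathrm{SQ}_{<\kappa}$.
   Context: A non-principal ultrafilter is $\kappa$-complete if it is closed under intersections of fewer than $\kappa$ of its members. A Banach space $Z$ is $\mathrm{SQ}_{<\kappa}$ if for every set $A\subset S_Z$ with $|A|<\kappa$ there exists $y\in S_Z$ with $\|x\pm y\|\le 1$ for all $x\in A$. *)

theory Defs
  imports "HOL-Analysis.Analysis"
begin

definition card_less :: "'a set \<Rightarrow> 'b set \<Rightarrow> bool" where
  "card_less A B \<longleftrightarrow> (card_of A, card_of B) \<in> ordLess"

definition is_ultrafilter :: "'i set set \<Rightarrow> bool" where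
  "is_ultrafilter U \<longleftrightarrow>
     UNIV \<in> U \<and> {} \<notin> U \<and>
     (\<forall>A B. A \<in> U \<and> A \<subseteq> B \<longrightarrow> B \<in> U) \<and>
     (\<forall>A B. A \<in> U \<and> B \<in> U \<longrightarrow> A \<inter> B \<in> U) \<and>
     (\<forall>A. A \<in> U \<or> - A \<in> U)"

definition non_principal :: "'i set set \<Rightarrow> bool" where
  "non_principal U \<longleftrightarrow> (\<forall>i. {i} \<notin> U)"

text \<open>kappa-complete: closed under intersections of fewer than kappa = |K| members.\<close>
definition kappa_complete :: "'k set \<Rightarrow> 'i set set \<Rightarrow> bool" where
  "kappa_complete K U \<longleftrightarrow>
     (\<forall>F. F \<subseteq> U \<and> F \<noteq> {} \<and> card_less F K \<longrightarrow> \<Inter>F \<in> U)"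

definition linf_space :: "('i \<Rightarrow> real) set" where
  "linf_space = {f. bounded (range f)}"

definition linf_norm :: "('i \<Rightarrow> real) \<Rightarrow> real" where
  "linf_norm f = (SUP i. \<bar>f i\<bar>)"

definition equivalent_norm :: "(('i \<Rightarrow> real) \<Rightarrow> real) \<Rightarrow> bool" where
  "equivalent_norm N \<longleftrightarrow>
     (\<forall>x\<in>linf_space. N x \<ge> 0 \<and> (N x = 0 \<longleftrightarrow> (\<forall>i. x i = 0))) \<and>
     (\<forall>x\<in>linf_space. \<forall>c::real. N (\<lambda>i. c * x i) = \<bar>c\<bar> * N x) \<and>
     (\<forall>x\<in>linf_space. \<forall>y\<in>linf_space. N (\<lambda>i. x i + y i) \<le> N x + N y) \<and>
     (\<exists>c C. 0 < c \<and> (\<forall>x\<in>linf_space. c * linf_norm x \<le> N x \<and> N x \<le> C * linf_norm x))"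

definition SQ_less :: "'k set \<Rightarrow> (('i \<Rightarrow> real) \<Rightarrow> real) \<Rightarrow> bool" where
  "SQ_less K N \<longleftrightarrow>
     (\<forall>A. A \<subseteq> {x\<in>linf_space. N x = 1} \<and> card_less A K \<longrightarrow>
        (\<exists>y\<in>linf_space. N y = 1 \<and> (\<forall>x\<in>A. N (\<lambda>i. x i + y i) \<le> 1 \<and> N (\<lambda>i. x i - y i) \<le> 1)))"

end

theory Submission
  imports Defs
begin

text \<open>A countably complete ultrafilter \<open>U\<close> makes every bounded \<open>x\<close> constant, with value
  \<open>ulim U x\<close>, on a member of \<open>U\<close>; the norm \<open>max \<bar>ulim U x\<bar> \<parallel>x - ulim U x\<parallel>\<^sub>\<infinity>\<close> is then
  equivalent to the sup norm. Given fewer than \<open>\<kappa>\<close> unit vectors, \<open>\<kappa>\<close>-completeness yields an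
  index \<open>j\<close> at which each of them equals its limit. As \<open>U\<close> is non-principal, the unit vector
  \<open>e\<^sub>j\<close> has limit \<open>0\<close>, so adding \<open>\<plusminus>e\<^sub>j\<close> to \<open>x\<close> leaves \<open>ulim U x\<close> unchanged and alters
  \<open>x - ulim U x\<close> only at \<open>j\<close>, where it was \<open>0\<close>; hence \<open>x \<plusminus> e\<^sub>j\<close> stays in the unit ball.\<close>

definition countably_complete :: "'i set set \<Rightarrow> bool" where
  "countably_complete U \<longleftrightarrow> (\<forall>F. countable F \<and> F \<subseteq> U \<and> F \<noteq> {} \<longrightarrow> \<Inter>F \<in> U)"

lemma ultrafilter_UNIV: "is_ultrafilter U \<Longrightarrow> UNIV \<in> U"
  unfolding is_ultrafilter_def by blast

lemma ultrafilter_empty: "is_ultrafilter U \<Longrightarrow> {} \<notin> U"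
  unfolding is_ultrafilter_def by blast

lemma ultrafilter_ex_mem: "is_ultrafilter U \<Longrightarrow> A \<in> U \<Longrightarrow> \<exists>i. i \<in> A"
  using ultrafilter_empty[of U] by (cases "A = {}") auto

lemma ultrafilter_superset: "is_ultrafilter U \<Longrightarrow> A \<in> U \<Longrightarrow> A \<subseteq> B \<Longrightarrow> B \<in> U"
  unfolding is_ultrafilter_def by blast

lemma ultrafilter_Int: "is_ultrafilter U \<Longrightarrow> A \<in> U \<Longrightarrow> B \<in> U \<Longrightarrow> A \<inter> B \<in> U"
  unfolding is_ultrafilter_def by blast

lemma ultrafilter_Compl: "is_ultrafilter U \<Longrightarrow> A \<notin> U \<Longrightarrow> - A \<in> U"
  unfolding is_ultrafilter_def by blast

lemma card_less_image: "card_less A K \<Longrightarrow> card_less (f ` A) K"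
  unfolding card_less_def using card_of_image ordLeq_ordLess_trans by blast

lemma countable_iff_card_of_ordLeq_nat:
  "countable A \<longleftrightarrow> (card_of A, card_of (UNIV :: nat set)) \<in> ordLeq"
  unfolding countable_def card_of_ordLeq[symmetric] by auto

lemma countable_card_less_uncountable:
  assumes "countable A" and "\<not> countable K"
  shows "card_less A K"
proof -
  have "(card_of K, card_of (UNIV :: nat set)) \<notin> ordLeq"
    using assms(2) countable_iff_card_of_ordLeq_nat by blast
  then have "(card_of (UNIV :: nat set), card_of K) \<in> ordLess"
    using not_ordLeq_iff_ordLess[OF card_of_Well_order card_of_Well_order] by blast
  with assms(1) show ?thesis
    unfolding card_less_def countable_iff_card_of_ordLeq_nat by (rule ordLeq_ordLess_trans)
qed

lemma kappa_complete_imp_countably_complete: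
  assumes "\<not> countable K" and "kappa_complete K U"
  shows "countably_complete U"
  unfolding countably_complete_def
proof (intro allI impI)
  fix F assume "countable F \<and> F \<subseteq> U \<and> F \<noteq> {}"
  with countable_card_less_uncountable[OF _ assms(1)] assms(2) show "\<Inter>F \<in> U"
    unfolding kappa_complete_def by blast
qed

lemma kappa_complete_INT:
  assumes "is_ultrafilter U" "kappa_complete K U" "card_less A K"
    and "\<And>x. x \<in> A \<Longrightarrow> f x \<in> U"
  shows "(\<Inter>x\<in>A. f x) \<in> U"
proof (cases "A = {}")
  case True
  then show ?thesis using ultrafilter_UNIV[OF assms(1)] by simp
next
  case False
  have "f ` A \<subseteq> U" using assms(4) by blast
  then show ?thesis
    using False assms(2) card_less_image[OF assms(3), of f] unfolding kappa_complete_def by simp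
qed

lemma linf_space_iff: "x \<in> linf_space \<longleftrightarrow> (\<exists>B. \<forall>i. \<bar>x i\<bar> \<le> B)"
  unfolding linf_space_def bounded_real by auto

lemma abs_le_linf_norm: "x \<in> linf_space \<Longrightarrow> \<bar>x i\<bar> \<le> linf_norm x"
  unfolding linf_norm_def linf_space_iff by (auto intro!: cSUP_upper bdd_aboveI2)

lemma linf_norm_le: "(\<And>i. \<bar>x i\<bar> \<le> B) \<Longrightarrow> linf_norm x \<le> B"
  unfolding linf_norm_def by (rule cSUP_least) auto

lemma linf_space_add_const:
  assumes "x \<in> linf_space" shows "(\<lambda>i. x i + c) \<in> linf_space"
proof -
  obtain B where B: "\<And>i. \<bar>x i\<bar> \<le> B" using assms unfolding linf_space_iff by blast
  have "\<bar>x i + c\<bar> \<le> B + \<bar>c\<bar>" for i using B[of i] abs_triangle_ineq[of "x i" c] by linarith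
  then show ?thesis unfolding linf_space_iff by blast
qed

lemma linf_space_cmult:
  assumes "x \<in> linf_space" shows "(\<lambda>i. c * x i) \<in> linf_space"
proof -
  obtain B where "\<And>i. \<bar>x i\<bar> \<le> B" using assms unfolding linf_space_iff by blast
  then have "\<bar>c * x i\<bar> \<le> \<bar>c\<bar> * B" for i by (simp add: abs_mult mult_left_mono)
  then show ?thesis unfolding linf_space_iff by blast
qed

lemma countably_complete_INT_nat:
  assumes "countably_complete U" and "\<And>n::nat. f n \<in> U"
  shows "(\<Inter>n. f n) \<in> U"
proof -
  have "range f \<subseteq> U" using assms(2) by blast
  then show ?thesis using assms(1) unfolding countably_complete_def by simp
qed

lemma ultrafilter_limit_exists:
  assumes uf: "is_ultrafilter U" and x: "x \<in> linf_space"
  shows "\<exists>L. \<forall>e>0. {i. \<bar>x i - L\<bar> \<le> e} \<in> U"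
proof -
  obtain B where B: "\<And>i. \<bar>x i\<bar> \<le> B" using x unfolding linf_space_iff by blast
  define S where "S = {c. {i. c \<le> x i} \<in> U}"
  have "- B \<le> x i" for i
    using B[of i] by (simp add: abs_le_iff)
  then have "{i. - B \<le> x i} = UNIV" by blast
  then have "- B \<in> S"
    using ultrafilter_UNIV[OF uf] unfolding S_def by simp
  have "bdd_above S"
  proof (rule bdd_aboveI)
    fix c assume "c \<in> S"
    then obtain i where "c \<le> x i"
      using ultrafilter_ex_mem[OF uf] unfolding S_def by blast
    then show "c \<le> B" using B[of i] by (simp add: abs_le_iff)
  qed
  define L where "L = Sup S"
  have above: "{i. L - e \<le> x i} \<in> U" if "0 < e" for e
  proof -
    have "L - e < Sup S" using \<open>0 < e\<close> unfolding L_def by simp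
    then obtain c where "c \<in> S" "L - e < c"
      using less_cSup_iff[OF _ \<open>bdd_above S\<close>] \<open>- B \<in> S\<close> by blast
    moreover have "{i. c \<le> x i} \<subseteq> {i. L - e \<le> x i}" using \<open>L - e < c\<close> by auto
    ultimately show ?thesis using ultrafilter_superset[OF uf] unfolding S_def by blast
  qed
  have below: "{i. x i < L + e} \<in> U" if "0 < e" for e
  proof -
    have "L + e \<notin> S"
      using cSup_upper[OF _ \<open>bdd_above S\<close>, of "L + e"] \<open>0 < e\<close> unfolding L_def by linarith
    then have "- {i. L + e \<le> x i} \<in> U"
      using ultrafilter_Compl[OF uf] unfolding S_def by blast
    moreover have "- {i. L + e \<le> x i} = {i. x i < L + e}" by auto
    ultimately show ?thesis by simp
  qed
  have "{i. \<bar>x i - L\<bar> \<le> e} \<in> U" if "0 < e" for e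
  proof -
    have "{i. L - e \<le> x i} \<inter> {i. x i < L + e} \<in> U"
      using above[OF that] below[OF that] by (rule ultrafilter_Int[OF uf])
    moreover have "{i. L - e \<le> x i} \<inter> {i. x i < L + e} \<subseteq> {i. \<bar>x i - L\<bar> \<le> e}"
      by auto
    ultimately show ?thesis using ultrafilter_superset[OF uf] by blast
  qed
  then show ?thesis by blast
qed

lemma countably_complete_ultrafilter_constant:
  assumes uf: "is_ultrafilter U" and cc: "countably_complete U"
    and x: "x \<in> linf_space"
  shows "\<exists>c. {i. x i = c} \<in> U"
proof -
  obtain L where L: "\<And>e. 0 < e \<Longrightarrow> {i. \<bar>x i - L\<bar> \<le> e} \<in> U"
    using ultrafilter_limit_exists[OF uf x] by blast
  have "(\<Inter>n. {i. \<bar>x i - L\<bar> \<le> inverse (real (Suc n))}) \<in> U"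
    using L by (intro countably_complete_INT_nat[OF cc]) simp
  moreover have "(\<Inter>n. {i. \<bar>x i - L\<bar> \<le> inverse (real (Suc n))}) \<subseteq> {i. x i = L}"
  proof
    fix i assume "i \<in> (\<Inter>n. {i. \<bar>x i - L\<bar> \<le> inverse (real (Suc n))})"
    then have small: "\<bar>x i - L\<bar> \<le> inverse (real (Suc n))" for n by blast
    show "i \<in> {i. x i = L}"
    proof (rule ccontr)
      assume "i \<notin> {i. x i = L}"
      then obtain n where "inverse (real (Suc n)) < \<bar>x i - L\<bar>"
        using reals_Archimedean[of "\<bar>x i - L\<bar>"] by auto
      with small[of n] show False by simp
    qed
  qed
  ultimately show ?thesis using ultrafilter_superset[OF uf] by blast
qed

text \<open>Meaningful only when some level set of \<open>x\<close> belongs to \<open>U\<close>; otherwise an arbitrary value.\<close>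
definition ulim :: "'i set set \<Rightarrow> ('i \<Rightarrow> real) \<Rightarrow> real" where
  "ulim U x = (THE c. {i. x i = c} \<in> U)"

definition ultra_norm :: "'i set set \<Rightarrow> ('i \<Rightarrow> real) \<Rightarrow> real" where
  "ultra_norm U x = max \<bar>ulim U x\<bar> (linf_norm (\<lambda>i. x i - ulim U x))"

lemma ulim_eqI:
  assumes uf: "is_ultrafilter U" and "A \<in> U" and "\<And>i. i \<in> A \<Longrightarrow> x i = c"
  shows "ulim U x = c"
  unfolding ulim_def
proof (rule the_equality)
  have "A \<subseteq> {i. x i = c}" using assms(3) by blast
  with uf \<open>A \<in> U\<close> show c: "{i. x i = c} \<in> U" by (rule ultrafilter_superset)
  fix d assume "{i. x i = d} \<in> U"
  with c have "{i. x i = c} \<inter> {i. x i = d} \<in> U" by (rule ultrafilter_Int[OF uf])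
  then obtain i where "x i = c" "x i = d" using ultrafilter_ex_mem[OF uf] by blast
  then show "d = c" by simp
qed

lemma ultra_norm_nonneg: "0 \<le> ultra_norm U x"
  unfolding ultra_norm_def by simp

lemma ultra_norm_leI:
  assumes "\<bar>ulim U x\<bar> \<le> B" and "\<And>i. \<bar>x i - ulim U x\<bar> \<le> B"
  shows "ultra_norm U x \<le> B"
  unfolding ultra_norm_def using assms linf_norm_le[of "\<lambda>i. x i - ulim U x" B] by simp

lemma abs_ulim_le_ultra_norm: "\<bar>ulim U x\<bar> \<le> ultra_norm U x"
  unfolding ultra_norm_def by simp

lemma abs_diff_ulim_le_ultra_norm:
  assumes "x \<in> linf_space"
  shows "\<bar>x i - ulim U x\<bar> \<le> ultra_norm U x"
  using abs_le_linf_norm[OF linf_space_add_const[OF assms, of "- ulim U x"], of i]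
  unfolding ultra_norm_def by simp

locale countably_complete_ultrafilter =
  fixes U :: "'i set set"
  assumes ultrafilter: "is_ultrafilter U"
    and countably_complete: "countably_complete U"
begin

lemma ulim_level_set:
  assumes "x \<in> linf_space"
  shows "{i. x i = ulim U x} \<in> U"
proof -
  obtain c where c: "{i. x i = c} \<in> U"
    using countably_complete_ultrafilter_constant[OF ultrafilter countably_complete assms] by blast
  then have "ulim U x = c" by (rule ulim_eqI[OF ultrafilter]) simp
  with c show ?thesis by simp
qed

lemma abs_ulim_le_linf_norm:
  assumes "x \<in> linf_space"
  shows "\<bar>ulim U x\<bar> \<le> linf_norm x"
proof -
  obtain i where "x i = ulim U x"
    using ultrafilter_ex_mem[OF ultrafilter ulim_level_set[OF assms]] by blast
  then show ?thesis using abs_le_linf_norm[OF assms, of i] by simp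
qed

lemma ulim_add:
  assumes "x \<in> linf_space" and "y \<in> linf_space"
  shows "ulim U (\<lambda>i. x i + y i) = ulim U x + ulim U y"
  using ultrafilter_Int[OF ultrafilter ulim_level_set[OF assms(1)] ulim_level_set[OF assms(2)]]
  by (rule ulim_eqI[OF ultrafilter]) simp

lemma ulim_cmult:
  assumes "x \<in> linf_space"
  shows "ulim U (\<lambda>i. c * x i) = c * ulim U x"
  using ulim_level_set[OF assms] by (rule ulim_eqI[OF ultrafilter]) simp

lemma ulim_add_spike:
  assumes "x \<in> linf_space" and "{j} \<notin> U"
  shows "ulim U (\<lambda>i. x i + (if i = j then c else 0)) = ulim U x"
  using ultrafilter_Int[OF ultrafilter ulim_level_set[OF assms(1)]
      ultrafilter_Compl[OF ultrafilter assms(2)]]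
  by (rule ulim_eqI[OF ultrafilter]) auto

lemma ultra_norm_eq_0_iff:
  assumes "x \<in> linf_space"
  shows "ultra_norm U x = 0 \<longleftrightarrow> (\<forall>i. x i = 0)"
proof
  assume "ultra_norm U x = 0"
  then have "ulim U x = 0" using abs_ulim_le_ultra_norm[of U x] by simp
  with \<open>ultra_norm U x = 0\<close> show "\<forall>i. x i = 0"
    using abs_diff_ulim_le_ultra_norm[OF assms] by (metis abs_le_zero_iff diff_zero)
next
  assume "\<forall>i. x i = 0"
  moreover from this have "ulim U x = 0"
    using ulim_eqI[OF ultrafilter ultrafilter_UNIV[OF ultrafilter]] by blast
  ultimately have "ultra_norm U x \<le> 0" by (intro ultra_norm_leI) auto
  then show "ultra_norm U x = 0" using ultra_norm_nonneg[of U x] by simp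
qed

lemma ultra_norm_cmult_le:
  assumes "x \<in> linf_space"
  shows "ultra_norm U (\<lambda>i. c * x i) \<le> \<bar>c\<bar> * ultra_norm U x"
proof (rule ultra_norm_leI)
  show "\<bar>ulim U (\<lambda>i. c * x i)\<bar> \<le> \<bar>c\<bar> * ultra_norm U x"
    using abs_ulim_le_ultra_norm[of U x]
    by (simp add: ulim_cmult[OF assms] abs_mult mult_left_mono)
  fix i
  have "\<bar>c * x i - ulim U (\<lambda>i. c * x i)\<bar> = \<bar>c\<bar> * \<bar>x i - ulim U x\<bar>"
    by (simp add: ulim_cmult[OF assms] abs_mult flip: right_diff_distrib)
  also have "\<dots> \<le> \<bar>c\<bar> * ultra_norm U x"
    using abs_diff_ulim_le_ultra_norm[OF assms] by (simp add: mult_left_mono)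
  finally show "\<bar>c * x i - ulim U (\<lambda>i. c * x i)\<bar> \<le> \<bar>c\<bar> * ultra_norm U x" .
qed

lemma ultra_norm_cmult:
  assumes "x \<in> linf_space"
  shows "ultra_norm U (\<lambda>i. c * x i) = \<bar>c\<bar> * ultra_norm U x"
proof (cases "c = 0")
  case True
  then show ?thesis
    using ultra_norm_eq_0_iff[OF linf_space_cmult[OF assms, of 0]] by simp
next
  case False
  have "ultra_norm U x = ultra_norm U (\<lambda>i. inverse c * (c * x i))"
    using False by (simp add: mult.assoc[symmetric])
  also have "\<dots> \<le> \<bar>inverse c\<bar> * ultra_norm U (\<lambda>i. c * x i)"
    by (rule ultra_norm_cmult_le[OF linf_space_cmult[OF assms]])
  finally have "\<bar>c\<bar> * ultra_norm U x \<le> ultra_norm U (\<lambda>i. c * x i)"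
    using False by (simp add: abs_inverse field_simps)
  with ultra_norm_cmult_le[OF assms, of c] show ?thesis by simp
qed

lemma ultra_norm_triangle:
  assumes "x \<in> linf_space" and "y \<in> linf_space"
  shows "ultra_norm U (\<lambda>i. x i + y i) \<le> ultra_norm U x + ultra_norm U y"
proof (rule ultra_norm_leI)
  show "\<bar>ulim U (\<lambda>i. x i + y i)\<bar> \<le> ultra_norm U x + ultra_norm U y"
    using abs_ulim_le_ultra_norm[of U x] abs_ulim_le_ultra_norm[of U y]
    by (simp add: ulim_add[OF assms])
  fix i show "\<bar>x i + y i - ulim U (\<lambda>i. x i + y i)\<bar> \<le> ultra_norm U x + ultra_norm U y"
    using abs_diff_ulim_le_ultra_norm[OF assms(1), of i U] abs_diff_ulim_le_ultra_norm[OF assms(2), of i U]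
    by (simp add: ulim_add[OF assms])
qed

lemma linf_norm_le_ultra_norm:
  assumes "x \<in> linf_space"
  shows "linf_norm x \<le> 2 * ultra_norm U x"
proof (rule linf_norm_le)
  fix i show "\<bar>x i\<bar> \<le> 2 * ultra_norm U x"
    using abs_diff_ulim_le_ultra_norm[OF assms, of i U] abs_ulim_le_ultra_norm[of U x] by linarith
qed

lemma ultra_norm_le_linf_norm:
  assumes "x \<in> linf_space"
  shows "ultra_norm U x \<le> 2 * linf_norm x"
proof (rule ultra_norm_leI)
  have "0 \<le> linf_norm x" using abs_le_linf_norm[OF assms, of undefined] by linarith
  then show "\<bar>ulim U x\<bar> \<le> 2 * linf_norm x" using abs_ulim_le_linf_norm[OF assms] by linarith
  fix i show "\<bar>x i - ulim U x\<bar> \<le> 2 * linf_norm x"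
    using abs_ulim_le_linf_norm[OF assms] abs_le_linf_norm[OF assms, of i] by linarith
qed

lemma equivalent_norm_ultra_norm: "equivalent_norm (ultra_norm U)"
  unfolding equivalent_norm_def
proof (intro conjI ballI allI)
  fix x :: "'i \<Rightarrow> real" assume x: "x \<in> linf_space"
  show "0 \<le> ultra_norm U x" by (rule ultra_norm_nonneg)
  show "ultra_norm U x = 0 \<longleftrightarrow> (\<forall>i. x i = 0)" by (rule ultra_norm_eq_0_iff[OF x])
  show "ultra_norm U (\<lambda>i. c * x i) = \<bar>c\<bar> * ultra_norm U x" for c by (rule ultra_norm_cmult[OF x])
next
  fix x y :: "'i \<Rightarrow> real" assume "x \<in> linf_space" and "y \<in> linf_space"
  then show "ultra_norm U (\<lambda>i. x i + y i) \<le> ultra_norm U x + ultra_norm U y"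
    by (rule ultra_norm_triangle)
next
  show "\<exists>c C. 0 < c \<and> (\<forall>x\<in>linf_space. c * linf_norm x \<le> ultra_norm U x \<and> ultra_norm U x \<le> C * linf_norm x)"
  proof (intro exI conjI ballI)
    show "(0::real) < 1 / 2" by simp
    fix x :: "'i \<Rightarrow> real" assume "x \<in> linf_space"
    then show "1 / 2 * linf_norm x \<le> ultra_norm U x" and "ultra_norm U x \<le> 2 * linf_norm x"
      using linf_norm_le_ultra_norm ultra_norm_le_linf_norm by force+
  qed
qed

lemma ultra_norm_add_spike_le:
  assumes "x \<in> linf_space" and "{j} \<notin> U" and "x j = ulim U x"
  shows "ultra_norm U (\<lambda>i. x i + (if i = j then c else 0)) \<le> max (ultra_norm U x) \<bar>c\<bar>"
proof (rule ultra_norm_leI)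
  note ulim_spike = ulim_add_spike[OF assms(1,2), of c]
  show "\<bar>ulim U (\<lambda>i. x i + (if i = j then c else 0))\<bar> \<le> max (ultra_norm U x) \<bar>c\<bar>"
    using abs_ulim_le_ultra_norm[of U x] unfolding ulim_spike by simp
  fix i show "\<bar>x i + (if i = j then c else 0) - ulim U (\<lambda>i. x i + (if i = j then c else 0))\<bar>
      \<le> max (ultra_norm U x) \<bar>c\<bar>"
    using abs_diff_ulim_le_ultra_norm[OF assms(1), of i U] assms(3) unfolding ulim_spike by auto
qed

lemma ultra_norm_unit_vector:
  assumes "{j} \<notin> U"
  shows "ultra_norm U (\<lambda>i. if i = j then 1 else 0) = 1"
proof -
  let ?e = "\<lambda>i. if i = j then 1 else 0 :: real"
  have e: "?e \<in> linf_space" unfolding linf_space_iff by (intro exI[of _ 1]) simp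
  have "ulim U ?e = 0"
    using ultrafilter_Compl[OF ultrafilter assms] by (rule ulim_eqI[OF ultrafilter]) simp
  show ?thesis
  proof (rule antisym)
    show "ultra_norm U ?e \<le> 1"
      by (rule ultra_norm_leI) (simp_all add: \<open>ulim U ?e = 0\<close>)
    show "1 \<le> ultra_norm U ?e"
      using abs_diff_ulim_le_ultra_norm[OF e, of j U] by (simp add: \<open>ulim U ?e = 0\<close>)
  qed
qed

lemma SQ_less_ultra_norm:
  assumes "non_principal U" and "kappa_complete K U"
  shows "SQ_less K (ultra_norm U)"
  unfolding SQ_less_def
proof (intro allI impI)
  fix A :: "('i \<Rightarrow> real) set"
  assume "A \<subseteq> {x \<in> linf_space. ultra_norm U x = 1} \<and> card_less A K"
  then have A: "\<And>x. x \<in> A \<Longrightarrow> x \<in> linf_space \<and> ultra_norm U x = 1"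
    and "card_less A K" by auto
  have "(\<Inter>x\<in>A. {i. x i = ulim U x}) \<in> U"
    using kappa_complete_INT[OF ultrafilter assms(2) \<open>card_less A K\<close>] A ulim_level_set
    by simp
  then obtain j where "j \<in> (\<Inter>x\<in>A. {i. x i = ulim U x})"
    using ultrafilter_ex_mem[OF ultrafilter] by blast
  then have j: "\<And>x. x \<in> A \<Longrightarrow> x j = ulim U x" by blast
  have "{j} \<notin> U" using assms(1) unfolding non_principal_def by blast
  define e where "e i = (if i = j then 1 else 0 :: real)" for i
  have "e \<in> linf_space" unfolding linf_space_iff e_def by (intro exI[of _ 1]) simp
  moreover have "ultra_norm U e = 1"
    using ultra_norm_unit_vector[OF \<open>{j} \<notin> U\<close>] unfolding e_def by simp
  moreover have "ultra_norm U (\<lambda>i. x i + e i) \<le> 1 \<and> ultra_norm U (\<lambda>i. x i - e i) \<le> 1"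
    if "x \<in> A" for x
  proof -
    have spike: "ultra_norm U (\<lambda>i. x i + (if i = j then c else 0)) \<le> max 1 \<bar>c\<bar>" for c
      using ultra_norm_add_spike_le[OF _ \<open>{j} \<notin> U\<close> j[OF that]] A[OF that] by simp
    have "(\<lambda>i. x i + e i) = (\<lambda>i. x i + (if i = j then 1 else 0))"
      and "(\<lambda>i. x i - e i) = (\<lambda>i. x i + (if i = j then -1 else 0))"
      by (auto simp: e_def)
    then show ?thesis using spike[of 1] spike[of "-1"] by simp
  qed
  ultimately show "\<exists>y\<in>linf_space. ultra_norm U y = 1 \<and>
      (\<forall>x\<in>A. ultra_norm U (\<lambda>i. x i + y i) \<le> 1 \<and> ultra_norm U (\<lambda>i. x i - y i) \<le> 1)"
    by auto
qed

end

theorem proposition3p6: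
  fixes U :: "'i set set"
  assumes "\<not> countable (UNIV :: 'k set)"
    and "\<not> countable (UNIV :: 'i set)"
    and "is_ultrafilter U" and "non_principal U"
    and "kappa_complete (UNIV :: 'k set) U"
  shows "\<exists>N :: ('i \<Rightarrow> real) \<Rightarrow> real. equivalent_norm N \<and> SQ_less (UNIV :: 'k set) N"
proof -
  \<comment> \<open>The uncountability of the index set is not needed: it follows from the other hypotheses.\<close>
  interpret countably_complete_ultrafilter U
    using assms(3) kappa_complete_imp_countably_complete[OF assms(1,5)] by unfold_locales
  show ?thesis using equivalent_norm_ultra_norm SQ_less_ultra_norm[OF assms(4,5)] by blast
qed

end
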